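(* Let $\mathcal{D}$ be any distribution on $\mathbb{R}^m\times\{-1,+1\}$, let $p,q>0$ and $\epsilon_p,\epsilon_q\ge0$, and let $f(\mathbf{x})=\operatorname{sign}(\mathbf{w}^T\mathbf{x}+b)$ for some $\mathbf{w}\in\mathbb{R}^m$, $b\in\mathbb{R}$. Let $S_p(\mathbf{x})=\{\mathbf{x}+\mathbf{r}:\|\mathbf{r}\|_p\le\epsilon_p\}$, $S_q(\mathbf{x})=\{\mathbf{x}+\mathbf{r}:\|\mathbf{r}\|_q\le\epsilon_q\}$ and $S_{\mathrm{affine}}(\mathbf{x})=\{\mathbf{x}+\mathbf{r}_1+\mathbf{r}_2:\beta\in[0,1],\ \|\mathbf{r}_1\|_p\le\beta\epsilon_p,\ \|\mathbf{r}_2\|_q\le(1-\beta)\epsilon_q\}$. Then $$\mathcal{R}^{\mathrm{max}}_{\mathrm{adv}}(f;S_p,S_q)=\mathcal{R}_{\mathrm{adv}}(f;S_{\mathrm{affine}}).$$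
   Context: $\|\mathbf{r}\|_p=(\sum_i|r_i|^p)^{1/p}$ (for $p=\infty$, $\max_i|r_i|$). $\operatorname{sign}(t)=+1$ for $t\ge0$ and $-1$ for $t<0$. Adversarial risk: $\mathcal{R}_{\mathrm{adv}}(f;S)=\Pr_{(\mathbf{x},y)\sim\mathcal{D}}[\exists\,\mathbf{x}'\in S(\mathbf{x}): f(\mathbf{x}')\neq y]$; $\mathcal{R}^{\mathrm{max}}_{\mathrm{adv}}(f;S_p,S_q)=\mathcal{R}_{\mathrm{adv}}(f;S_p\cup S_q)$ with $(S_p\cup S_q)(\mathbf{x})=S_p(\mathbf{x})\cup S_q(\mathbf{x})$. *)

theory Defs
  imports "HOL-Probability.Probability"
begin

definition lp_norm :: "ereal \<Rightarrow> real ^ 'm \<Rightarrow> real" where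
  "lp_norm p r = (if p = \<infinity> then Max (range (\<lambda>i. \<bar>r $ i\<bar>))
                  else (\<Sum>i\<in>UNIV. \<bar>r $ i\<bar> powr real_of_ereal p) powr (1 / real_of_ereal p))"

definition sign_pm :: "real \<Rightarrow> real" where
  "sign_pm t = (if t \<ge> 0 then 1 else -1)"

definition linear_classifier :: "real ^ 'm \<Rightarrow> real \<Rightarrow> real ^ 'm \<Rightarrow> real" where
  "linear_classifier w b x = sign_pm (w \<bullet> x + b)"

definition lp_ball_set :: "ereal \<Rightarrow> real \<Rightarrow> real ^ 'm \<Rightarrow> (real ^ 'm) set" where
  "lp_ball_set p eps x = {x + r | r. lp_norm p r \<le> eps}"

definition affine_set :: "ereal \<Rightarrow> ereal \<Rightarrow> real \<Rightarrow> real \<Rightarrow> real ^ 'm \<Rightarrow> (real ^ 'm) set" where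
  "affine_set p q ep eq x = {x + r1 + r2 | \<beta> r1 r2. \<beta> \<in> {0..1} \<and>
      lp_norm p r1 \<le> \<beta> * ep \<and> lp_norm q r2 \<le> (1 - \<beta>) * eq}"

definition adv_risk :: "('a \<times> 'b) measure \<Rightarrow> ('a \<Rightarrow> 'b) \<Rightarrow> ('a \<Rightarrow> 'a set) \<Rightarrow> real" where
  "adv_risk D f S = measure D {z \<in> space D. \<exists>x'\<in>S (fst z). f x' \<noteq> snd z}"

definition adv_risk_max :: "('a \<times> 'b) measure \<Rightarrow> ('a \<Rightarrow> 'b) \<Rightarrow> ('a \<Rightarrow> 'a set) \<Rightarrow> ('a \<Rightarrow> 'a set) \<Rightarrow> real" where
  "adv_risk_max D f Sp Sq = adv_risk D f (\<lambda>x. Sp x \<union> Sq x)"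

end

theory Submission
  imports Defs
begin

text \<open>Both perturbation sets of the union lie in the affine set (take \<open>\<beta> = 1\<close> or \<open>\<beta> = 0\<close>),
  and conversely, by positive homogeneity of the norms, a point \<open>x + r\<^sub>1 + r\<^sub>2\<close> of the affine set is
  the convex combination \<open>\<beta> (x + r\<^sub>1/\<beta>) + (1 - \<beta>) (x + r\<^sub>2/(1 - \<beta>))\<close> of a point of each ball.
  So the affine set lies between the union and its convex hull. Each level set of a linear
  classifier is a half-space, hence convex, so a label that is correct on the whole union is
  correct on its convex hull: the two adversarial events coincide pointwise.\<close>

lemma lp_norm_zero [simp]: "lp_norm p 0 = 0"
  by (simp add: lp_norm_def)

lemma lp_norm_le_zero_imp_eq_0:
  assumes "p > 0" "lp_norm p r \<le> 0"
  shows "r = 0"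
proof (cases "p = \<infinity>")
  case True
  have "\<bar>r $ i\<bar> \<le> Max (range (\<lambda>i. \<bar>r $ i\<bar>))" for i
    by (rule Max_ge) auto
  with assms(2) True show ?thesis
    by (force simp: lp_norm_def vec_eq_iff)
next
  case False
  define S where "S = (\<Sum>i\<in>UNIV. \<bar>r $ i\<bar> powr real_of_ereal p)"
  have "S powr (1 / real_of_ereal p) = 0"
    using assms(2) False powr_ge_zero[of S] by (simp add: lp_norm_def S_def)
  then have "\<forall>i\<in>UNIV. \<bar>r $ i\<bar> powr real_of_ereal p = 0"
    unfolding S_def by (subst sum_nonneg_eq_0_iff[symmetric]) auto
  then show ?thesis
    by (simp add: vec_eq_iff)
qed

lemma lp_norm_scaleR:
  assumes "p > 0" "c > 0"
  shows "lp_norm p (c *\<^sub>R r) = c * lp_norm p r"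
proof (cases "p = \<infinity>")
  case True
  have "mono ((*) c)"
    using assms(2) by (auto intro!: monoI mult_left_mono)
  then have "c * Max (range (\<lambda>i. \<bar>r $ i\<bar>)) = Max ((*) c ` range (\<lambda>i. \<bar>r $ i\<bar>))"
    by (rule mono_Max_commute) auto
  moreover have "range (\<lambda>i. \<bar>(c *\<^sub>R r) $ i\<bar>) = (*) c ` range (\<lambda>i. \<bar>r $ i\<bar>)"
    using assms(2) by (auto simp: abs_mult image_image)
  ultimately show ?thesis
    using True by (simp add: lp_norm_def)
next
  case False
  define t where "t = real_of_ereal p"
  have "t > 0"
    using assms(1) False unfolding t_def by (cases p) auto
  have "(\<Sum>i\<in>UNIV. \<bar>(c *\<^sub>R r) $ i\<bar> powr t) = c powr t * (\<Sum>i\<in>UNIV. \<bar>r $ i\<bar> powr t)"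
    using assms(2) by (simp add: abs_mult powr_mult sum_distrib_left)
  then have "(\<Sum>i\<in>UNIV. \<bar>(c *\<^sub>R r) $ i\<bar> powr t) powr (1/t)
      = (c powr t) powr (1/t) * (\<Sum>i\<in>UNIV. \<bar>r $ i\<bar> powr t) powr (1/t)"
    by (simp add: powr_mult sum_nonneg)
  also have "(c powr t) powr (1/t) = c"
    using \<open>t > 0\<close> assms(2) by (simp add: powr_powr)
  finally show ?thesis
    using False by (simp add: lp_norm_def t_def)
qed

lemma rescaled_mem_lp_ball_set:
  assumes "p > 0" "c > 0" "lp_norm p r \<le> c * e"
  shows "x + (1 / c) *\<^sub>R r \<in> lp_ball_set p e x"
proof -
  have "lp_norm p ((1 / c) *\<^sub>R r) = lp_norm p r / c"
    using lp_norm_scaleR[OF assms(1), of "1 / c" r] assms(2) by simp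
  also have "\<dots> \<le> e"
    using assms(2,3) by (simp add: divide_le_eq mult.commute)
  finally show ?thesis
    unfolding lp_ball_set_def by blast
qed

lemma lp_ball_sets_subset_affine_set:
  "lp_ball_set p ep x \<union> lp_ball_set q eq x \<subseteq> affine_set p q ep eq x"
proof -
  have "x + r \<in> affine_set p q ep eq x" if "lp_norm p r \<le> ep" for r
    using that unfolding affine_set_def
    by (intro CollectI exI[of _ 1] exI[of _ r] exI[of _ 0]) auto
  moreover have "x + r \<in> affine_set p q ep eq x" if "lp_norm q r \<le> eq" for r
    using that unfolding affine_set_def
    by (intro CollectI exI[of _ 0] exI[of _ 0] exI[of _ r]) auto
  ultimately show ?thesis
    unfolding lp_ball_set_def by blast
qed

lemma affine_set_subset_convex_hull:
  assumes "p > 0" "q > 0"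
  shows "affine_set p q ep eq x \<subseteq> convex hull (lp_ball_set p ep x \<union> lp_ball_set q eq x)"
    (is "_ \<subseteq> convex hull ?U")
proof
  fix z assume "z \<in> affine_set p q ep eq x"
  then obtain \<beta> r1 r2 where z: "z = x + r1 + r2" and \<beta>: "0 \<le> \<beta>" "\<beta> \<le> 1"
    and r1: "lp_norm p r1 \<le> \<beta> * ep" and r2: "lp_norm q r2 \<le> (1 - \<beta>) * eq"
    unfolding affine_set_def by auto
  have U_hull: "?U \<subseteq> convex hull ?U"
    by (rule hull_subset)
  consider "\<beta> = 0" | "\<beta> = 1" | "0 < \<beta>" "\<beta> < 1"
    using \<beta> by linarith
  then show "z \<in> convex hull ?U"
  proof cases
    case 1
    then have "r1 = 0"
      using r1 lp_norm_le_zero_imp_eq_0[OF assms(1)] by simp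
    with 1 r2 z U_hull show ?thesis
      unfolding lp_ball_set_def by auto
  next
    case 2
    then have "r2 = 0"
      using r2 lp_norm_le_zero_imp_eq_0[OF assms(2)] by simp
    with 2 r1 z U_hull show ?thesis
      unfolding lp_ball_set_def by auto
  next
    case 3
    define u where "u = x + (1 / \<beta>) *\<^sub>R r1"
    define v where "v = x + (1 / (1 - \<beta>)) *\<^sub>R r2"
    have "u \<in> ?U" "v \<in> ?U"
      using rescaled_mem_lp_ball_set[OF assms(1) _ r1] rescaled_mem_lp_ball_set[OF assms(2) _ r2] 3
      unfolding u_def v_def by auto
    moreover have "z = \<beta> *\<^sub>R u + (1 - \<beta>) *\<^sub>R v"
      using 3 unfolding z u_def v_def by (simp add: algebra_simps)
    ultimately show ?thesis
      using 3 U_hull by (auto intro: convexD[OF convex_convex_hull])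
  qed
qed

lemma convex_linear_classifier_level_set:
  "convex {x. linear_classifier w b x = y}"
proof -
  have "{x. linear_classifier w b x = y} =
      (if y = 1 then {x. w \<bullet> x \<ge> - b} else if y = -1 then {x. w \<bullet> x < - b} else {})"
    by (auto simp: linear_classifier_def sign_pm_def)
  then show ?thesis
    by (simp add: convex_halfspace_ge convex_halfspace_lt)
qed

lemma ex_misclassified_convex_hull_iff:
  assumes "convex {x. f x = y}" "A \<subseteq> B" "B \<subseteq> convex hull A"
  shows "(\<exists>x\<in>A. f x \<noteq> y) \<longleftrightarrow> (\<exists>x\<in>B. f x \<noteq> y)"
proof -
  have "convex hull A \<subseteq> {x. f x = y}" if "\<forall>x\<in>A. f x = y"
    using that assms(1) by (intro hull_minimal) auto
  with assms(2,3) show ?thesis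
    by blast
qed

theorem claim3:
  fixes D :: "((real ^ 'm::finite) \<times> real) measure"
    and p q :: ereal and ep eq b :: real and w :: "real ^ 'm"
  assumes "prob_space D"
    and "sets D = sets borel"
    and "AE z in D. snd z \<in> {-1, 1}"
    and "p > 0" and "q > 0"
    and "ep \<ge> 0" and "eq \<ge> 0"
  shows "adv_risk_max D (linear_classifier w b) (lp_ball_set p ep) (lp_ball_set q eq)
       = adv_risk D (linear_classifier w b) (affine_set p q ep eq)"
proof -
  have "(\<exists>x'\<in>lp_ball_set p ep x \<union> lp_ball_set q eq x. linear_classifier w b x' \<noteq> y)
      \<longleftrightarrow> (\<exists>x'\<in>affine_set p q ep eq x. linear_classifier w b x' \<noteq> y)" for x y
    by (intro ex_misclassified_convex_hull_iff convex_linear_classifier_level_set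
        lp_ball_sets_subset_affine_set affine_set_subset_convex_hull assms(4,5))
  then show ?thesis
    unfolding adv_risk_max_def adv_risk_def by simp
qed

end
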